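(* A linear functional $H:\underline{\mathcal Z}\to\mathcal Y$ has a formal convolution representation if and only if it has the minimal FMP and is minimally continuous.
   Context: Let $(\mathcal Z,\|\cdot\|)$ and $(\mathcal Y,\|\cdot\|_{\mathcal Y})$ be normed vector spaces over $\mathbb R$ and $\mathcal B=\{z\in\mathcal Z:\|z\|\le1\}$. Let $\mathbb Z_-=\{0,-1,-2,\dots\}$; elements of $\mathcal Z^{\mathbb Z_-}$ are sequences $\underline z=(z_t)_{t\le0}$. For $t\in\mathbb Z_-$, $\delta^t:\mathcal Z\to\mathcal Z^{\mathbb Z_-}$ maps $z$ to the sequence whose entry at time $t$ is $z$ and all other entries are $0$. Standing assumption: $\underline{\mathcal Z}\subseteq\mathcal Z^{\mathbb Z_-}$ is a set such that (a) $\underline{\mathcal Z}$ is convex and $\underline{\mathcal Z}=\{-\underline z:\underline z\in\underline{\mathcal Z}\}$; (b) $\delta^t(\mathcal B)\subseteq\underline{\mathcal Z}$ for all $t\in\mathbb Z_-$; (c) for every $\underline z\in\underline{\mathcal Z}$ and every $J\subseteq\mathbb Z_-$, the sequence $\sum_{t\in J}\delta^t(z_t)$ (equal to $z_t$ at times $t\in J$ and $0$ elsewhere) belongs to $\underline{\mathcal Z}$. A functional $H:\underline{\mathcal Z}\to\mathcal Y$ is linear if it is the restriction of a linear map defined on the linear span of $\underline{\mathcal Z}$. $L(\mathcal Z,\mathcal Y)$ is the space of continuous linear maps $\mathcal Z\to\mathcal Y$. $H$ has a formal convolution representation if there is $\underline\kappa\in L(\mathcal Z,\mathcal Y)^{\mathbb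 Z_-}$ with $H(\underline z)=\lim_{T\to-\infty}\sum_{t=T}^0\kappa_t(z_t)$ for all $\underline z\in\underline{\mathcal Z}$. $H$ is minimally continuous if $H\circ\delta^t:\mathcal B\to\mathcal Y$ is continuous for every $t\in\mathbb Z_-$. $H$ has the minimal fading memory property (minimal FMP) if $H(\sum_{t=T}^0\delta^t(z_t))\to H(\underline z)$ as $T\to-\infty$ for every $\underline z\in\underline{\mathcal Z}$. *)

theory Defs
  imports "HOL-Analysis.Analysis"
begin

text \<open>Sequences indexed by Z_- = {0,-1,-2,...} are encoded as functions nat => 'z,
  where the value at index n is the entry at time -n.\<close>

definition delta :: "nat \<Rightarrow> 'z::real_normed_vector \<Rightarrow> (nat \<Rightarrow> 'z)" where
  "delta t z = (\<lambda>s. if s = t then z else 0)"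

definition admissible_seq_set :: "(nat \<Rightarrow> 'z::real_normed_vector) set \<Rightarrow> bool" where
  "admissible_seq_set Z \<longleftrightarrow>
     (\<forall>u\<in>Z. \<forall>v\<in>Z. \<forall>a::real. 0 \<le> a \<and> a \<le> 1 \<longrightarrow> (\<lambda>t. a *\<^sub>R u t + (1 - a) *\<^sub>R v t) \<in> Z)
   \<and> (\<forall>u\<in>Z. (\<lambda>t. - u t) \<in> Z)
   \<and> (\<forall>t z. norm z \<le> 1 \<longrightarrow> delta t z \<in> Z)
   \<and> (\<forall>u\<in>Z. \<forall>J. (\<lambda>s. if s \<in> J then u s else 0) \<in> Z)"

definition seq_span :: "(nat \<Rightarrow> 'z::real_normed_vector) set \<Rightarrow> (nat \<Rightarrow> 'z) set" where
  "seq_span Z = {u. \<exists>S c. finite S \<and> S \<subseteq> Z \<and> u = (\<lambda>t. \<Sum>v\<in>S. c v *\<^sub>R v t)}"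

definition linear_functional ::
  "(nat \<Rightarrow> 'z::real_normed_vector) set \<Rightarrow> ((nat \<Rightarrow> 'z) \<Rightarrow> 'y::real_normed_vector) \<Rightarrow> bool" where
  "linear_functional Z H \<longleftrightarrow>
     (\<exists>L. (\<forall>u\<in>seq_span Z. \<forall>v\<in>seq_span Z. \<forall>a b::real.
             L (\<lambda>t. a *\<^sub>R u t + b *\<^sub>R v t) = a *\<^sub>R L u + b *\<^sub>R L v)
        \<and> (\<forall>u\<in>Z. H u = L u))"

definition formal_convolution_rep ::
  "(nat \<Rightarrow> 'z::real_normed_vector) set \<Rightarrow> ((nat \<Rightarrow> 'z) \<Rightarrow> 'y::real_normed_vector) \<Rightarrow> bool" where
  "formal_convolution_rep Z H \<longleftrightarrow>
     (\<exists>\<kappa> :: nat \<Rightarrow> 'z \<Rightarrow> 'y. (\<forall>t. bounded_linear (\<kappa> t))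
        \<and> (\<forall>u\<in>Z. (\<lambda>T. \<Sum>t\<le>T. \<kappa> t (u t)) \<longlonglongrightarrow> H u))"

definition minimally_continuous ::
  "((nat \<Rightarrow> 'z::real_normed_vector) \<Rightarrow> 'y::real_normed_vector) \<Rightarrow> bool" where
  "minimally_continuous H \<longleftrightarrow> (\<forall>t. continuous_on (cball 0 1) (\<lambda>z. H (delta t z)))"

definition minimal_FMP ::
  "(nat \<Rightarrow> 'z::real_normed_vector) set \<Rightarrow> ((nat \<Rightarrow> 'z) \<Rightarrow> 'y::real_normed_vector) \<Rightarrow> bool" where
  "minimal_FMP Z H \<longleftrightarrow>
     (\<forall>u\<in>Z. (\<lambda>T. H (\<lambda>s. if s \<le> T then u s else 0)) \<longlonglongrightarrow> H u)"

end

theory Submission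
  imports Defs
begin

text \<open>If \<open>H\<close> has kernel \<open>\<kappa>\<close>, then on a sequence supported in \<open>{..T}\<close> the defining series
  is a finite sum; applied to truncations this gives the minimal fading memory property, and
  applied to \<open>delta t z\<close> it shows \<open>H \<circ> delta t = \<kappa> t\<close> on the unit ball. Conversely, let \<open>L\<close> be
  a linear extension of \<open>H\<close> and put \<open>\<kappa> t z = L (delta t z)\<close>. Each \<open>\<kappa> t\<close> is linear and agrees
  with the continuous map \<open>H \<circ> delta t\<close> on the unit ball, hence is bounded. By linearity the
  partial sums of \<open>\<Sum>\<^sub>t \<kappa> t (u t)\<close> are the values of \<open>H\<close> on the truncations of \<open>u\<close>, which
  converge to \<open>H u\<close> by the minimal fading memory property.\<close>

lemma linear_continuous_at_0_imp_bounded_linear: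
  fixes g :: "'a::real_normed_vector \<Rightarrow> 'b::real_normed_vector"
  assumes "linear g" and "continuous (at 0) g"
  shows "bounded_linear g"
proof -
  interpret linear g by fact
  obtain d where "d > 0" and "\<forall>x. dist x 0 < d \<longrightarrow> dist (g x) (g 0) < 1"
    using assms(2) unfolding continuous_at_eps_delta by (meson zero_less_one)
  then have d: "norm x < d \<Longrightarrow> norm (g x) < 1" for x
    by (simp add: zero)
  show ?thesis
  proof (rule bounded_linear_intro)
    fix x :: 'a
    show "norm (g x) \<le> norm x * (2 / d)"
    proof (cases "x = 0")
      case False
      define c where "c = d / (2 * norm x)"
      have "c > 0" using False \<open>d > 0\<close> by (simp add: c_def)
      have "norm (c *\<^sub>R x) < d" using False \<open>d > 0\<close> by (simp add: c_def)
      then have "c * norm (g x) < 1" using d[of "c *\<^sub>R x"] \<open>c > 0\<close> by (simp add: scale)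
      then show ?thesis using False \<open>d > 0\<close> by (simp add: c_def field_simps)
    qed (simp add: zero)
  qed (fact add scale)+
qed

lemma admissible_seq_set_delta:
  "admissible_seq_set Z \<Longrightarrow> norm z \<le> 1 \<Longrightarrow> delta t z \<in> Z"
  unfolding admissible_seq_set_def by blast

lemma admissible_seq_set_truncate:
  assumes "admissible_seq_set Z" and "u \<in> Z"
  shows "(\<lambda>s. if s \<le> T then u s else 0) \<in> Z"
proof -
  have "(\<lambda>s. if s \<in> {..T} then u s else 0) \<in> Z"
    using assms unfolding admissible_seq_set_def by blast
  then show ?thesis
    by simp
qed

lemma delta_add: "delta t (x + y) = (\<lambda>s. delta t x s + delta t y s)"
  by (auto simp: delta_def)

lemma delta_scaleR: "delta t (r *\<^sub>R x) = (\<lambda>s. r *\<^sub>R delta t x s)"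
  by (auto simp: delta_def)

lemma truncate_Suc:
  "(\<lambda>s. if s \<le> Suc T then u s else 0) =
     (\<lambda>s. (if s \<le> T then u s else 0) + delta (Suc T) (u (Suc T)) s)"
  by (auto simp: delta_def)

lemma in_seq_span: "u \<in> Z \<Longrightarrow> u \<in> seq_span Z"
  unfolding seq_span_def by (intro CollectI exI[of _ "{u}"] exI[of _ "\<lambda>_. 1"]) auto

lemma delta_in_seq_span:
  assumes "admissible_seq_set Z"
  shows "delta t z \<in> seq_span Z"
proof (cases "z = 0")
  case True
  then show ?thesis
    unfolding seq_span_def by (intro CollectI exI[of _ "{}"]) (auto simp: delta_def)
next
  case False
  \<comment> \<open>only the unit ball is guaranteed to lie in \<open>Z\<close>, so rescale\<close>
  have "delta t (z /\<^sub>R norm z) \<in> Z"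
    using False by (intro admissible_seq_set_delta[OF assms]) simp
  moreover have "delta t z = (\<lambda>s. norm z *\<^sub>R delta t (z /\<^sub>R norm z) s)"
    using False by (auto simp: delta_def)
  ultimately show ?thesis
    unfolding seq_span_def
    by (intro CollectI exI[of _ "{delta t (z /\<^sub>R norm z)}"] exI[of _ "\<lambda>_. norm z"]) auto
qed

definition linear_on_seq_span ::
  "(nat \<Rightarrow> 'z::real_normed_vector) set \<Rightarrow> ((nat \<Rightarrow> 'z) \<Rightarrow> 'y::real_normed_vector) \<Rightarrow> bool" where
  "linear_on_seq_span Z L \<longleftrightarrow>
     (\<forall>u\<in>seq_span Z. \<forall>v\<in>seq_span Z. \<forall>a b::real.
        L (\<lambda>t. a *\<^sub>R u t + b *\<^sub>R v t) = a *\<^sub>R L u + b *\<^sub>R L v)"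

lemma linear_functional_iff:
  "linear_functional Z H \<longleftrightarrow> (\<exists>L. linear_on_seq_span Z L \<and> (\<forall>u\<in>Z. H u = L u))"
  unfolding linear_functional_def linear_on_seq_span_def ..

lemma linear_on_seq_span_add:
  assumes "linear_on_seq_span Z L" and "u \<in> seq_span Z" and "v \<in> seq_span Z"
  shows "L (\<lambda>t. u t + v t) = L u + L v"
proof -
  have "L (\<lambda>t. 1 *\<^sub>R u t + 1 *\<^sub>R v t) = 1 *\<^sub>R L u + 1 *\<^sub>R L v"
    using assms unfolding linear_on_seq_span_def by blast
  then show ?thesis
    by simp
qed

lemma linear_on_seq_span_scaleR:
  assumes "linear_on_seq_span Z L" and "u \<in> seq_span Z"
  shows "L (\<lambda>t. r *\<^sub>R u t) = r *\<^sub>R L u"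
proof -
  have "L (\<lambda>t. r *\<^sub>R u t + 0 *\<^sub>R u t) = r *\<^sub>R L u + 0 *\<^sub>R L u"
    using assms unfolding linear_on_seq_span_def by blast
  then show ?thesis
    by simp
qed

lemma linear_on_seq_span_delta:
  assumes "admissible_seq_set Z" and "linear_on_seq_span Z L"
  shows "linear (\<lambda>z. L (delta t z))"
  using delta_in_seq_span[OF assms(1)]
  by (intro linearI)
    (simp_all add: delta_add delta_scaleR linear_on_seq_span_add[OF assms(2)]
      linear_on_seq_span_scaleR[OF assms(2)])

lemma bounded_linear_on_seq_span_delta:
  assumes "admissible_seq_set Z" and "linear_on_seq_span Z L" and "\<forall>u\<in>Z. H u = L u"
    and "minimally_continuous H"
  shows "bounded_linear (\<lambda>z. L (delta t z))"
proof (rule linear_continuous_at_0_imp_bounded_linear)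
  show "linear (\<lambda>z. L (delta t z))"
    using assms(1,2) by (rule linear_on_seq_span_delta)
  have "continuous_on (cball 0 1) (\<lambda>z. H (delta t z))"
    using assms(4) by (simp add: minimally_continuous_def)
  then have "continuous_on (cball 0 1) (\<lambda>z. L (delta t z))"
    by (rule continuous_on_eq) (simp add: assms(3) admissible_seq_set_delta[OF assms(1)])
  then show "continuous (at 0) (\<lambda>z. L (delta t z))"
    by (rule continuous_on_interior)
      (meson ball_subset_cball centre_in_ball interior_maximal open_ball subsetD zero_less_one)
qed

lemma partial_sums_delta_eq_truncate:
  assumes "admissible_seq_set Z" and "linear_on_seq_span Z L" and "\<forall>u\<in>Z. H u = L u"
    and "u \<in> Z"
  shows "(\<Sum>t\<le>T. L (delta t (u t))) = H (\<lambda>s. if s \<le> T then u s else 0)"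
proof -
  have trunc: "(\<lambda>s. if s \<le> T then u s else 0) \<in> Z" for T
    using assms(1,4) by (rule admissible_seq_set_truncate)
  have HL: "H v = L v" if "v \<in> Z" for v
    using assms(3) that by blast
  show ?thesis
  proof (induction T)
    case 0
    have "(\<lambda>s. if s \<le> 0 then u s else 0) = delta 0 (u 0)"
      by (auto simp: delta_def)
    then show ?case
      using HL[OF trunc[of 0]] by simp
  next
    case (Suc T)
    have "H (\<lambda>s. if s \<le> Suc T then u s else 0) = L (\<lambda>s. if s \<le> Suc T then u s else 0)"
      by (rule HL[OF trunc])
    also have "\<dots> = L (\<lambda>s. if s \<le> T then u s else 0) + L (delta (Suc T) (u (Suc T)))"
      unfolding truncate_Suc
      by (rule linear_on_seq_span_add[OF assms(2) in_seq_span[OF trunc]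
            delta_in_seq_span[OF assms(1)]])
    also have "\<dots> = H (\<lambda>s. if s \<le> T then u s else 0) + L (delta (Suc T) (u (Suc T)))"
      by (simp only: HL[OF trunc])
    finally show ?case
      by (simp add: Suc.IH)
  qed
qed

lemma formal_convolution_rep_iff_sums:
  "formal_convolution_rep Z H \<longleftrightarrow>
     (\<exists>\<kappa>. (\<forall>t. bounded_linear (\<kappa> t)) \<and> (\<forall>u\<in>Z. (\<lambda>t. \<kappa> t (u t)) sums H u))"
  by (simp add: formal_convolution_rep_def sums_def_le)

lemma convolution_finite_support:
  fixes \<kappa> :: "nat \<Rightarrow> 'z::real_normed_vector \<Rightarrow> 'y::real_normed_vector"
  assumes "\<And>t. \<kappa> t 0 = 0" and "(\<lambda>t. \<kappa> t (v t)) sums y"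
    and "finite A" and "\<And>t. t \<notin> A \<Longrightarrow> v t = 0"
  shows "y = (\<Sum>t\<in>A. \<kappa> t (v t))"
proof -
  have "(\<lambda>t. \<kappa> t (v t)) sums (\<Sum>t\<in>A. \<kappa> t (v t))"
    by (rule sums_finite[OF assms(3)]) (simp add: assms(1,4))
  then show ?thesis
    using assms(2) sums_unique2 by blast
qed

lemma formal_convolution_rep_imp_minimal_FMP:
  assumes "admissible_seq_set Z" and "formal_convolution_rep Z H"
  shows "minimal_FMP Z H"
  unfolding minimal_FMP_def
proof
  fix u assume "u \<in> Z"
  obtain \<kappa> where \<kappa>: "\<And>t. bounded_linear (\<kappa> t)"
    and sums: "\<And>u. u \<in> Z \<Longrightarrow> (\<lambda>t. \<kappa> t (u t)) sums H u"
    using assms(2) unfolding formal_convolution_rep_iff_sums by blast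
  have \<kappa>0: "\<kappa> t 0 = 0" for t
    using \<kappa> by (rule linear_simps(3))
  have "H (\<lambda>s. if s \<le> T then u s else 0) = (\<Sum>t\<le>T. \<kappa> t (u t))" for T
  proof -
    have "H (\<lambda>s. if s \<le> T then u s else 0) = (\<Sum>t\<le>T. \<kappa> t (if t \<le> T then u t else 0))"
      by (intro convolution_finite_support[where \<kappa>=\<kappa>, OF \<kappa>0 sums]
          admissible_seq_set_truncate[OF assms(1) \<open>u \<in> Z\<close>]) auto
    then show ?thesis
      by simp
  qed
  then show "(\<lambda>T. H (\<lambda>s. if s \<le> T then u s else 0)) \<longlonglongrightarrow> H u"
    using sums[OF \<open>u \<in> Z\<close>] by (simp add: sums_def_le)
qed

lemma formal_convolution_rep_imp_minimally_continuous:
  assumes "admissible_seq_set Z" and "formal_convolution_rep Z H"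
  shows "minimally_continuous H"
  unfolding minimally_continuous_def
proof
  fix t
  obtain \<kappa> where \<kappa>: "\<And>t. bounded_linear (\<kappa> t)"
    and sums: "\<And>u. u \<in> Z \<Longrightarrow> (\<lambda>t. \<kappa> t (u t)) sums H u"
    using assms(2) unfolding formal_convolution_rep_iff_sums by blast
  have \<kappa>0: "\<kappa> t 0 = 0" for t
    using \<kappa> by (rule linear_simps(3))
  have "H (delta t z) = \<kappa> t z" if "z \<in> cball 0 1" for z
  proof -
    have "delta t z \<in> Z"
      using that by (intro admissible_seq_set_delta[OF assms(1)]) simp
    then have "H (delta t z) = (\<Sum>s\<in>{t}. \<kappa> s (delta t z s))"
      by (intro convolution_finite_support[where \<kappa>=\<kappa>, OF \<kappa>0 sums])
        (auto simp: delta_def)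
    then show ?thesis
      by (simp add: delta_def)
  qed
  then show "continuous_on (cball 0 1) (\<lambda>z. H (delta t z))"
    by (intro continuous_on_eq[OF linear_continuous_on[OF \<kappa>]]) simp
qed

lemma minimal_FMP_imp_formal_convolution_rep:
  assumes "admissible_seq_set Z" and "linear_functional Z H"
    and "minimal_FMP Z H" and "minimally_continuous H"
  shows "formal_convolution_rep Z H"
proof -
  obtain L where L: "linear_on_seq_span Z L" and HL: "\<forall>u\<in>Z. H u = L u"
    using assms(2) unfolding linear_functional_iff by blast
  show ?thesis
    unfolding formal_convolution_rep_def
  proof (intro exI[of _ "\<lambda>t z. L (delta t z)"] conjI allI ballI)
    show "bounded_linear (\<lambda>z. L (delta t z))" for t
      using assms(1) L HL assms(4) by (rule bounded_linear_on_seq_span_delta)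
    show "(\<lambda>T. \<Sum>t\<le>T. L (delta t (u t))) \<longlonglongrightarrow> H u" if "u \<in> Z" for u
      using assms(3) that partial_sums_delta_eq_truncate[OF assms(1) L HL that]
      by (simp add: minimal_FMP_def)
  qed
qed

theorem lemma3p3:
  fixes Z :: "(nat \<Rightarrow> 'z::real_normed_vector) set"
    and H :: "(nat \<Rightarrow> 'z) \<Rightarrow> 'y::real_normed_vector"
  assumes "admissible_seq_set Z"
    and "linear_functional Z H"
  shows "formal_convolution_rep Z H \<longleftrightarrow> minimal_FMP Z H \<and> minimally_continuous H"
  using formal_convolution_rep_imp_minimal_FMP[OF assms(1)]
    formal_convolution_rep_imp_minimally_continuous[OF assms(1)]
    minimal_FMP_imp_formal_convolution_rep[OF assms]
  by blast

end
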